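(* Let $R$ be a Noetherian ring, let $P\in\operatorname{Spec}(R)$, and let $f:R\to R_P$ be the localization map. Let $\mathcal P(P)$ be the set of $P$-primary ideals of $R$, regarded as a subspace of $\mathcal I^\bullet(R)$ with the constructible topology, and let $\mathcal P(P)_\infty$ be the set of ideals of $R$ that are intersections of nonempty families of $P$-primary ideals. Then $$\mathcal P(P)_\infty=\mathrm{Cl}^\mathrm{cons}(\mathcal P(P))=f^\sharp(\mathcal I^\bullet(R_P)),$$ where $f^\sharp(J):=f^{-1}(J)$. In particular, if $R$ is local with maximal ideal $\mathfrak m$, then $\mathcal P(\mathfrak m)$ is dense in $\mathcal I^\bullet(R)$ with respect to the constructible topology.
   Context: For a ring $A$, $\mathcal I(A)$ is the set of ideals of $A$ and $\mathcal I^\bullet(A)$ the set of proper ideals. $\mathcal I(A)$ carries the Zariski topology with basis of open sets $\mathcal B(x_1,\ldots,x_n):=\{I\in\mathcal I(A)\mid x_1,\ldots,x_n\in I\}$; it is a spectral space. The constructible topology is the coarsest topology in which all open quasi-compact subsets of $\mathcal I(A)$ are clopen; $\mathrm{Cl}^\mathrm{cons}$ denotes closure in it, and $\mathcal I^\bullet(A)$ carries the subspace topology. *)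

theory Defs
  imports "HOL-Analysis.Analysis"
begin

definition ring_ideal :: "'a::comm_ring_1 set \<Rightarrow> bool" where
  "ring_ideal I \<longleftrightarrow> 0 \<in> I \<and> (\<forall>x\<in>I. \<forall>y\<in>I. x + y \<in> I) \<and> (\<forall>r. \<forall>x\<in>I. r * x \<in> I)"

definition ideals :: "'a::comm_ring_1 set set" where
  "ideals = {I. ring_ideal I}"

definition proper_ideals :: "'a::comm_ring_1 set set" where
  "proper_ideals = {I. ring_ideal I \<and> I \<noteq> UNIV}"

definition prime_ideal :: "'a::comm_ring_1 set \<Rightarrow> bool" where
  "prime_ideal P \<longleftrightarrow> ring_ideal P \<and> P \<noteq> UNIV \<and> (\<forall>a b. a * b \<in> P \<longrightarrow> a \<in> P \<or> b \<in> P)"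

definition maximal_ideal :: "'a::comm_ring_1 set \<Rightarrow> bool" where
  "maximal_ideal M \<longleftrightarrow> ring_ideal M \<and> M \<noteq> UNIV \<and>
     (\<forall>J. ring_ideal J \<and> M \<subseteq> J \<longrightarrow> J = M \<or> J = UNIV)"

definition ideal_radical :: "'a::comm_ring_1 set \<Rightarrow> 'a set" where
  "ideal_radical I = {x. \<exists>n. x ^ n \<in> I}"

definition primary_ideal :: "'a::comm_ring_1 set \<Rightarrow> bool" where
  "primary_ideal Q \<longleftrightarrow> ring_ideal Q \<and> Q \<noteq> UNIV \<and>
     (\<forall>x y. x * y \<in> Q \<longrightarrow> x \<in> Q \<or> (\<exists>n. y ^ n \<in> Q))"

definition primary_ideals_of :: "'a::comm_ring_1 set \<Rightarrow> 'a set set" where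
  "primary_ideals_of P = {Q. primary_ideal Q \<and> ideal_radical Q = P}"

definition primary_intersections_of :: "'a::comm_ring_1 set \<Rightarrow> 'a set set" where
  "primary_intersections_of P =
     {I. \<exists>\<Q>. \<Q> \<noteq> {} \<and> \<Q> \<subseteq> primary_ideals_of P \<and> I = \<Inter>\<Q>}"

definition noetherian_ring :: "'a::comm_ring_1 itself \<Rightarrow> bool" where
  "noetherian_ring _ \<longleftrightarrow>
     (\<forall>I :: nat \<Rightarrow> 'a set. (\<forall>n. ring_ideal (I n) \<and> I n \<subseteq> I (Suc n)) \<longrightarrow>
        (\<exists>N. \<forall>n\<ge>N. I n = I N))"

definition local_ring_with :: "'a::comm_ring_1 set \<Rightarrow> bool" where
  "local_ring_with M \<longleftrightarrow> maximal_ideal M \<and> (\<forall>J. maximal_ideal J \<longrightarrow> J = M)"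

text \<open>f : R \<rightarrow> S is (isomorphic to) the localization map R \<rightarrow> R_P: a ring homomorphism
  such that elements outside P become units, every element of S is a fraction
  f a / f s with s outside P, and the kernel consists of the elements killed
  by some s outside P (Atiyah--Macdonald, Cor. 3.2).\<close>
definition is_localization_at :: "'a::comm_ring_1 set \<Rightarrow> ('a \<Rightarrow> 'b::comm_ring_1) \<Rightarrow> bool" where
  "is_localization_at P f \<longleftrightarrow>
     f 1 = 1 \<and> (\<forall>x y. f (x + y) = f x + f y) \<and> (\<forall>x y. f (x * y) = f x * f y) \<and>
     (\<forall>s. s \<notin> P \<longrightarrow> f s dvd 1) \<and>
     (\<forall>x. f x = 0 \<longrightarrow> (\<exists>s. s \<notin> P \<and> s * x = 0)) \<and>
     (\<forall>y. \<exists>a s. s \<notin> P \<and> y * f s = f a)"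

definition zariski_ideals :: "'a::comm_ring_1 set topology" where
  "zariski_ideals = topology (arbitrary union_of
      (\<lambda>U. \<exists>F. finite F \<and> U = {I. ring_ideal I \<and> F \<subseteq> I}))"

text \<open>Constructible topology: coarsest topology on the same points in which every
  open quasi-compact subset is clopen (generated by the subbasis of open
  quasi-compact sets and their complements).\<close>
definition constructible_topology :: "'x topology \<Rightarrow> 'x topology" where
  "constructible_topology X = topology (arbitrary union_of
      (finite intersection_of
         (\<lambda>U. (openin X U \<and> compactin X U) \<or>
              (\<exists>V. openin X V \<and> compactin X V \<and> U = topspace X - V))
       relative_to topspace X))"

end

theory Submission
  imports Defs
begin

text \<open>Call a proper ideal I saturated with respect to P if s x \<in> I and s \<notin> P force x \<in> I;
  these are exactly the contractions of proper ideals of R_P, and all three sets of the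
  theorem turn out to be the set of saturated ideals. P-primary ideals are saturated. Conversely,
  in a Noetherian ring an ideal that is maximal among the saturated ideals avoiding an element g
  is P-primary, the Noetherian hypothesis entering through the stabilisation of the colon
  ideals Q : y^n. Intersecting such ideals separates a saturated ideal I from any finite set
  disjoint from it. Since compact Zariski-open sets are finite unions of the sets of ideals
  containing a finite set, the basic constructible neighbourhoods of I are the sets
  {J. F \<subseteq> J, G \<inter> J = {}} with F \<subseteq> I and G \<inter> I = {} finite, so this separation is exactly
  constructible density of the primary ideals. In a local ring every element outside the maximal
  ideal is a unit, so every proper ideal is saturated.\<close>

section \<open>Ideals and saturation\<close>

lemma ring_ideal_zero: "ring_ideal I \<Longrightarrow> 0 \<in> I"
  by (simp add: ring_ideal_def)

lemma ring_ideal_add: "ring_ideal I \<Longrightarrow> x \<in> I \<Longrightarrow> y \<in> I \<Longrightarrow> x + y \<in> I"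
  by (simp add: ring_ideal_def)

lemma ring_ideal_mult_left: "ring_ideal I \<Longrightarrow> x \<in> I \<Longrightarrow> r * x \<in> I"
  by (simp add: ring_ideal_def)

lemma ring_ideal_mult_right: "ring_ideal I \<Longrightarrow> x \<in> I \<Longrightarrow> x * r \<in> I"
  by (metis ring_ideal_mult_left mult.commute)

lemma ring_ideal_diff: "ring_ideal I \<Longrightarrow> x \<in> I \<Longrightarrow> y \<in> I \<Longrightarrow> x - y \<in> I"
  by (metis ring_ideal_add ring_ideal_mult_left diff_conv_add_uminus mult_minus1)

lemma ring_ideal_eq_UNIV_iff: "ring_ideal I \<Longrightarrow> I = UNIV \<longleftrightarrow> 1 \<in> I"
  by (metis UNIV_I UNIV_eq_I ring_ideal_mult_left mult.right_neutral)

lemma ring_ideal_Inter: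
  assumes "\<And>J. J \<in> \<J> \<Longrightarrow> ring_ideal J"
  shows "ring_ideal (\<Inter>\<J>)"
  using assms by (simp add: ring_ideal_def)

lemma ring_ideal_chain_Union:
  assumes "\<C> \<noteq> {}" "\<And>J. J \<in> \<C> \<Longrightarrow> ring_ideal J" "\<And>A B. A \<in> \<C> \<Longrightarrow> B \<in> \<C> \<Longrightarrow> A \<subseteq> B \<or> B \<subseteq> A"
  shows "ring_ideal (\<Union>\<C>)"
  unfolding ring_ideal_def
proof (intro conjI ballI allI)
  show "0 \<in> \<Union>\<C>"
    using assms(1,2) ring_ideal_zero by blast
  show "x + y \<in> \<Union>\<C>" if xy: "x \<in> \<Union>\<C>" "y \<in> \<Union>\<C>" for x y
  proof -
    obtain A B where "A \<in> \<C>" "B \<in> \<C>" "x \<in> A" "y \<in> B"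
      using xy by blast
    then show ?thesis
      using assms(2) assms(3)[of A B] ring_ideal_add by (metis UnionI subsetD)
  qed
  show "r * x \<in> \<Union>\<C>" if "x \<in> \<Union>\<C>" for r x
    using that assms(2) ring_ideal_mult_left by blast
qed

definition ideal_insert :: "'a::comm_ring_1 set \<Rightarrow> 'a \<Rightarrow> 'a set" where
  "ideal_insert I a = {i + r * a | i r. i \<in> I}"

lemma ring_ideal_ideal_insert:
  assumes I: "ring_ideal I"
  shows "ring_ideal (ideal_insert I a)"
  unfolding ring_ideal_def
proof (intro conjI ballI allI)
  show "0 \<in> ideal_insert I a"
    using I ring_ideal_zero unfolding ideal_insert_def by (force intro: exI[of _ 0])
  show "x + y \<in> ideal_insert I a" if xy: "x \<in> ideal_insert I a" "y \<in> ideal_insert I a" for x y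
  proof -
    obtain i r j s where "x = i + r * a" "y = j + s * a" "i \<in> I" "j \<in> I"
      using xy unfolding ideal_insert_def by blast
    then have "x + y = (i + j) + (r + s) * a" "i + j \<in> I"
      using I ring_ideal_add by (auto simp: algebra_simps)
    then show ?thesis
      unfolding ideal_insert_def by blast
  qed
  show "t * x \<in> ideal_insert I a" if x: "x \<in> ideal_insert I a" for t x
  proof -
    obtain i r where "x = i + r * a" "i \<in> I"
      using x unfolding ideal_insert_def by blast
    then have "t * x = t * i + (t * r) * a" "t * i \<in> I"
      using I ring_ideal_mult_left by (auto simp: distrib_left mult.assoc)
    then show ?thesis
      unfolding ideal_insert_def by blast
  qed
qed

lemma subset_ideal_insert: "I \<subseteq> ideal_insert I a"
  unfolding ideal_insert_def by (force intro: exI[of _ 0])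

lemma in_ideal_insert: "ring_ideal I \<Longrightarrow> a \<in> ideal_insert I a"
  unfolding ideal_insert_def using ring_ideal_zero by (force intro: exI[of _ 1])

lemma prime_ideal_mult_notin: "prime_ideal P \<Longrightarrow> s \<notin> P \<Longrightarrow> t \<notin> P \<Longrightarrow> s * t \<notin> P"
  unfolding prime_ideal_def by blast

lemma one_notin_prime_ideal: "prime_ideal P \<Longrightarrow> 1 \<notin> P"
  unfolding prime_ideal_def using ring_ideal_eq_UNIV_iff by blast

lemma prime_ideal_power: "prime_ideal P \<Longrightarrow> x ^ n \<in> P \<Longrightarrow> x \<in> P"
proof (induction n)
  case 0
  then show ?case
    using one_notin_prime_ideal by auto
next
  case (Suc n)
  then show ?case
    unfolding prime_ideal_def by auto
qed

lemma maximal_ideal_imp_prime_ideal: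
  assumes "maximal_ideal M"
  shows "prime_ideal M"
proof -
  have M: "ring_ideal M" "M \<noteq> UNIV" and max: "\<And>J. ring_ideal J \<Longrightarrow> M \<subseteq> J \<Longrightarrow> J = M \<or> J = UNIV"
    using assms unfolding maximal_ideal_def by auto
  have "b \<in> M" if "a * b \<in> M" "a \<notin> M" for a b
  proof -
    have "ideal_insert M a = UNIV"
      using max[OF ring_ideal_ideal_insert[OF M(1)] subset_ideal_insert] in_ideal_insert[OF M(1)] that(2)
      by blast
    then obtain m r where "1 = m + r * a" "m \<in> M"
      unfolding ideal_insert_def by blast
    then have "b = b * m + r * (a * b)"
      by (metis mult.commute mult.left_commute mult_1 distrib_left)
    then show "b \<in> M"
      using \<open>m \<in> M\<close> that(1) M(1) ring_ideal_add ring_ideal_mult_left by metis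
  qed
  then show ?thesis
    unfolding prime_ideal_def using M by blast
qed

definition saturated :: "'a::comm_ring_1 set \<Rightarrow> 'a set \<Rightarrow> bool" where
  "saturated P I \<longleftrightarrow> (\<forall>s x. s \<notin> P \<longrightarrow> s * x \<in> I \<longrightarrow> x \<in> I)"

definition saturation :: "'a::comm_ring_1 set \<Rightarrow> 'a set \<Rightarrow> 'a set" where
  "saturation P I = {x. \<exists>s. s \<notin> P \<and> s * x \<in> I}"

lemma saturatedD: "saturated P I \<Longrightarrow> s \<notin> P \<Longrightarrow> s * x \<in> I \<Longrightarrow> x \<in> I"
  unfolding saturated_def by blast

lemma saturated_Inter: "(\<And>J. J \<in> \<J> \<Longrightarrow> saturated P J) \<Longrightarrow> saturated P (\<Inter>\<J>)"
  unfolding saturated_def by blast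

lemma saturated_subset_prime:
  assumes "ring_ideal I" "I \<noteq> UNIV" "saturated P I"
  shows "I \<subseteq> P"
  using assms saturatedD[of P I _ 1] ring_ideal_eq_UNIV_iff by fastforce

lemma ring_ideal_saturation:
  assumes P: "prime_ideal P" and I: "ring_ideal I"
  shows "ring_ideal (saturation P I)"
  unfolding ring_ideal_def
proof (intro conjI ballI allI)
  show "0 \<in> saturation P I"
    using one_notin_prime_ideal[OF P] ring_ideal_zero[OF I] unfolding saturation_def
    by (intro CollectI exI[of _ 1]) simp
  show "x + y \<in> saturation P I" if xy: "x \<in> saturation P I" "y \<in> saturation P I" for x y
  proof -
    obtain s t where st: "s \<notin> P" "s * x \<in> I" "t \<notin> P" "t * y \<in> I"
      using xy unfolding saturation_def by blast
    have "(s * t) * (x + y) = t * (s * x) + s * (t * y)"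
      by (simp add: algebra_simps)
    also have "\<dots> \<in> I"
      by (simp add: st ring_ideal_add[OF I] ring_ideal_mult_left[OF I])
    finally show ?thesis
      using prime_ideal_mult_notin[OF P st(1,3)] unfolding saturation_def by blast
  qed
  show "r * x \<in> saturation P I" if x: "x \<in> saturation P I" for r x
  proof -
    obtain s where "s \<notin> P" "s * x \<in> I"
      using x unfolding saturation_def by blast
    then have "s * (r * x) \<in> I"
      using ring_ideal_mult_left[OF I, of "s * x" r] by (simp add: mult.left_commute)
    then show ?thesis
      using \<open>s \<notin> P\<close> unfolding saturation_def by blast
  qed
qed

lemma subset_saturation:
  assumes "prime_ideal P"
  shows "I \<subseteq> saturation P I"
proof
  fix x assume "x \<in> I"
  then show "x \<in> saturation P I"
    using one_notin_prime_ideal[OF assms] unfolding saturation_def by (intro CollectI exI[of _ 1]) simp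
qed

lemma saturated_saturation:
  assumes "prime_ideal P"
  shows "saturated P (saturation P I)"
  unfolding saturated_def
proof (intro allI impI)
  fix t y assume t: "t \<notin> P" and "t * y \<in> saturation P I"
  then obtain s where "s \<notin> P" "(s * t) * y \<in> I"
    unfolding saturation_def by (auto simp: mult.assoc)
  then show "y \<in> saturation P I"
    using prime_ideal_mult_notin[OF assms _ t] unfolding saturation_def by blast
qed

lemma primary_ideals_of_saturated:
  assumes "Q \<in> primary_ideals_of P"
  shows "saturated P Q"
  unfolding saturated_def
proof (intro allI impI)
  fix s x assume "s \<notin> P" "s * x \<in> Q"
  then have "x * s \<in> Q" "\<forall>n. s ^ n \<notin> Q"
    using assms unfolding primary_ideals_of_def ideal_radical_def by (auto simp: mult.commute)
  then show "x \<in> Q"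
    using assms unfolding primary_ideals_of_def primary_ideal_def by blast
qed

lemma primary_ideals_of_Int:
  assumes Q1: "Q1 \<in> primary_ideals_of P" and Q2: "Q2 \<in> primary_ideals_of P"
  shows "Q1 \<inter> Q2 \<in> primary_ideals_of P"
proof -
  have p1: "primary_ideal Q1" "ideal_radical Q1 = P" and p2: "primary_ideal Q2" "ideal_radical Q2 = P"
    using Q1 Q2 unfolding primary_ideals_of_def by auto
  then have i1: "ring_ideal Q1" and i2: "ring_ideal Q2"
    unfolding primary_ideal_def by auto
  have rad1: "y \<in> P \<longleftrightarrow> (\<exists>n. y ^ n \<in> Q1)" and rad2: "y \<in> P \<longleftrightarrow> (\<exists>n. y ^ n \<in> Q2)" for y
    using p1(2) p2(2) unfolding ideal_radical_def by auto
  have power_in_Int: "\<exists>k. y ^ k \<in> Q1 \<inter> Q2" if y: "y \<in> P" for y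
  proof -
    obtain n m where "y ^ n \<in> Q1" "y ^ m \<in> Q2"
      using y rad1[of y] rad2[of y] by blast
    then have "y ^ m * y ^ n \<in> Q1" "y ^ n * y ^ m \<in> Q2"
      by (simp_all add: ring_ideal_mult_left[OF i1] ring_ideal_mult_left[OF i2])
    then have "y ^ (m + n) \<in> Q1" "y ^ (m + n) \<in> Q2"
      by (simp_all add: power_add mult.commute)
    then have "y ^ (m + n) \<in> Q1 \<inter> Q2"
      by blast
    then show ?thesis ..
  qed
  have "ring_ideal (\<Inter>{Q1, Q2})"
    using i1 i2 by (intro ring_ideal_Inter) auto
  then have "ring_ideal (Q1 \<inter> Q2)"
    by simp
  moreover have "Q1 \<inter> Q2 \<noteq> UNIV"
    using p1(1) unfolding primary_ideal_def by auto
  moreover have "x \<in> Q1 \<inter> Q2 \<or> (\<exists>n. y ^ n \<in> Q1 \<inter> Q2)" if "x * y \<in> Q1 \<inter> Q2" for x y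
  proof (cases "x \<in> Q1 \<inter> Q2")
    case False
    then have "\<exists>n. y ^ n \<in> Q1 \<or> y ^ n \<in> Q2"
      using that p1(1) p2(1) unfolding primary_ideal_def by blast
    then have "y \<in> P"
      using rad1[of y] rad2[of y] by blast
    then show ?thesis
      using power_in_Int by blast
  qed simp
  moreover have "ideal_radical (Q1 \<inter> Q2) = P"
  proof
    show "ideal_radical (Q1 \<inter> Q2) \<subseteq> P"
      using p1(2) unfolding ideal_radical_def by auto
    show "P \<subseteq> ideal_radical (Q1 \<inter> Q2)"
      using power_in_Int unfolding ideal_radical_def by blast
  qed
  ultimately show ?thesis
    unfolding primary_ideals_of_def primary_ideal_def by blast
qed

section \<open>Primary ideals in a Noetherian ring\<close>

lemma noetherian_colon_power_stable:
  fixes Q :: "'a::comm_ring_1 set"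
  assumes "noetherian_ring TYPE('a)" and Q: "ring_ideal Q"
  obtains N where "\<And>z. z * y ^ Suc N \<in> Q \<Longrightarrow> z * y ^ N \<in> Q"
proof -
  define C where "C n = {z. z * y ^ n \<in> Q}" for n
  have "ring_ideal (C n)" for n
    unfolding ring_ideal_def C_def
    by (simp add: ring_ideal_zero[OF Q] ring_ideal_add[OF Q] ring_ideal_mult_left[OF Q]
        distrib_right mult.assoc)
  moreover have "C n \<subseteq> C (Suc n)" for n
  proof
    fix z assume "z \<in> C n"
    then have "(z * y ^ n) * y \<in> Q"
      unfolding C_def by (simp add: ring_ideal_mult_right[OF Q])
    then show "z \<in> C (Suc n)"
      unfolding C_def by (simp add: ac_simps)
  qed
  ultimately have "\<forall>n. ring_ideal (C n) \<and> C n \<subseteq> C (Suc n)"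
    by blast
  then obtain N where N: "\<forall>n\<ge>N. C n = C N"
    using assms(1) unfolding noetherian_ring_def by blast
  have stable: "C (Suc N) = C N"
    using N[rule_format, of "Suc N"] by simp
  show thesis
  proof (rule that)
    fix z assume "z * y ^ Suc N \<in> Q"
    then have "z \<in> C (Suc N)"
      unfolding C_def by simp
    then have "z \<in> C N"
      using stable by simp
    then show "z * y ^ N \<in> Q"
      unfolding C_def by simp
  qed
qed

definition maximal_saturated_avoiding :: "'a::comm_ring_1 set \<Rightarrow> 'a \<Rightarrow> 'a set \<Rightarrow> bool" where
  "maximal_saturated_avoiding P g Q \<longleftrightarrow> ring_ideal Q \<and> saturated P Q \<and> g \<notin> Q \<and>
     (\<forall>J. ring_ideal J \<and> saturated P J \<and> g \<notin> J \<and> Q \<subseteq> J \<longrightarrow> J = Q)"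

lemma maximal_saturated_avoidingD:
  assumes "maximal_saturated_avoiding P g Q"
  shows "ring_ideal Q" "saturated P Q" "g \<notin> Q"
  using assms unfolding maximal_saturated_avoiding_def by auto

lemma maximal_saturated_avoiding_in_saturation_insert:
  assumes P: "prime_ideal P" and Q: "maximal_saturated_avoiding P g Q" and x: "x \<notin> Q"
  shows "g \<in> saturation P (ideal_insert Q x)"
proof -
  let ?K = "saturation P (ideal_insert Q x)"
  have ideal: "ring_ideal Q"
    using maximal_saturated_avoidingD[OF Q] by blast
  have "x \<in> ?K"
    using in_ideal_insert[OF ideal] subset_saturation[OF P] by blast
  moreover have "Q \<subseteq> ?K"
    using subset_ideal_insert subset_saturation[OF P] by blast
  moreover have "ring_ideal ?K" "saturated P ?K"
    using ring_ideal_saturation[OF P ring_ideal_ideal_insert[OF ideal]] saturated_saturation[OF P]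
    by blast+
  ultimately show ?thesis
    using Q x unfolding maximal_saturated_avoiding_def by blast
qed

lemma maximal_saturated_avoiding_primary:
  fixes P :: "'a::comm_ring_1 set"
  assumes noeth: "noetherian_ring TYPE('a)" and P: "prime_ideal P"
    and Q: "maximal_saturated_avoiding P g Q" and xy: "x * y \<in> Q" and x: "x \<notin> Q"
  shows "\<exists>n. y ^ n \<in> Q"
proof (rule ccontr)
  txt \<open>By maximality g is, up to factors outside P, a combination both of Q and x and of Q and y^N.
    Multiplying the two presentations yields z = s1 s2 g with z y \<in> Q, and the stability of
    Q : y^n at N then forces z \<in> Q.\<close>
  assume no_power: "\<nexists>n. y ^ n \<in> Q"
  note ideal = maximal_saturated_avoidingD(1)[OF Q]
  obtain N where N: "\<And>z. z * y ^ Suc N \<in> Q \<Longrightarrow> z * y ^ N \<in> Q"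
    using noetherian_colon_power_stable[OF noeth ideal] by blast
  obtain s1 q1 r1 where 1: "s1 \<notin> P" "q1 \<in> Q" "s1 * g = q1 + r1 * x"
    using maximal_saturated_avoiding_in_saturation_insert[OF P Q x]
    unfolding saturation_def ideal_insert_def by blast
  obtain s2 q2 r2 where 2: "s2 \<notin> P" "q2 \<in> Q" "s2 * g = q2 + r2 * y ^ N"
    using maximal_saturated_avoiding_in_saturation_insert[OF P Q, of "y ^ N"] no_power
    unfolding saturation_def ideal_insert_def by blast
  define z where "z = s1 * s2 * g"
  have z1: "z = s2 * q1 + (s2 * r1) * x" and z2: "z = s1 * q2 + (s1 * r2) * y ^ N"
    unfolding z_def using 1(3) 2(3) by (metis mult.assoc mult.commute distrib_left)+
  have "z * y = (s2 * q1) * y + (s2 * r1) * (x * y)"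
    using z1 by (simp add: algebra_simps)
  also have "\<dots> \<in> Q"
    by (simp add: 1(2) xy ring_ideal_add[OF ideal] ring_ideal_mult_left[OF ideal]
        ring_ideal_mult_right[OF ideal])
  finally have "z * y \<in> Q" .
  have "(s1 * r2) * y ^ Suc N = z * y - (s1 * q2) * y"
    using z2 by (simp add: algebra_simps)
  also have "\<dots> \<in> Q"
    by (simp add: \<open>z * y \<in> Q\<close> 2(2) ring_ideal_diff[OF ideal] ring_ideal_mult_left[OF ideal]
        ring_ideal_mult_right[OF ideal])
  finally have "(s1 * r2) * y ^ N \<in> Q"
    by (rule N)
  then have "s1 * s2 * g \<in> Q"
    using z2 unfolding z_def by (simp add: 2(2) ring_ideal_add[OF ideal] ring_ideal_mult_left[OF ideal])
  then show False
    using saturatedD[OF _ prime_ideal_mult_notin[OF P 1(1) 2(1)]] maximal_saturated_avoidingD[OF Q]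
    by blast
qed

lemma maximal_saturated_avoiding_mult_prime:
  assumes P: "prime_ideal P" and Q: "maximal_saturated_avoiding P g Q" and x: "x \<in> P"
  shows "x * g \<in> Q"
proof (rule ccontr)
  assume "x * g \<notin> Q"
  then obtain s q r where sqr: "s \<notin> P" "q \<in> Q" "s * g = q + r * (x * g)"
    using maximal_saturated_avoiding_in_saturation_insert[OF P Q]
    unfolding saturation_def ideal_insert_def by blast
  have "s - r * x \<notin> P"
    using sqr(1) x P ring_ideal_add[of P "s - r * x" "r * x"] ring_ideal_mult_left[of P x r]
    unfolding prime_ideal_def by auto
  moreover have "(s - r * x) * g = q"
    using sqr(3) by (simp add: algebra_simps)
  ultimately show False
    using saturatedD[of P Q "s - r * x" g] sqr(2) maximal_saturated_avoidingD[OF Q] by auto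
qed

lemma maximal_saturated_avoiding_in_primary_ideals_of:
  fixes P :: "'a::comm_ring_1 set"
  assumes noeth: "noetherian_ring TYPE('a)" and P: "prime_ideal P"
    and Q: "maximal_saturated_avoiding P g Q"
  shows "Q \<in> primary_ideals_of P"
proof -
  have ideal: "ring_ideal Q" and sat: "saturated P Q" and g: "g \<notin> Q" and proper: "Q \<noteq> UNIV"
    using maximal_saturated_avoidingD[OF Q] by auto
  have "ideal_radical Q = P"
  proof
    show "ideal_radical Q \<subseteq> P"
      using saturated_subset_prime[OF ideal proper sat] prime_ideal_power[OF P]
      unfolding ideal_radical_def by blast
    show "P \<subseteq> ideal_radical Q"
    proof
      fix x assume "x \<in> P"
      then have "g * x \<in> Q"
        using maximal_saturated_avoiding_mult_prime[OF P Q, of x] by (simp add: mult.commute)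
      then show "x \<in> ideal_radical Q"
        using maximal_saturated_avoiding_primary[OF noeth P Q] g unfolding ideal_radical_def by blast
    qed
  qed
  moreover have "primary_ideal Q"
    unfolding primary_ideal_def
    using ideal proper maximal_saturated_avoiding_primary[OF noeth P Q] by blast
  ultimately show ?thesis
    unfolding primary_ideals_of_def by blast
qed

lemma exists_primary_ideal_avoiding:
  fixes P :: "'a::comm_ring_1 set"
  assumes noeth: "noetherian_ring TYPE('a)" and P: "prime_ideal P"
    and I: "ring_ideal I" "saturated P I" and g: "g \<notin> I"
  obtains Q where "Q \<in> primary_ideals_of P" "I \<subseteq> Q" "g \<notin> Q"
proof -
  define \<A> where "\<A> = {J. ring_ideal J \<and> saturated P J \<and> I \<subseteq> J \<and> g \<notin> J}"
  have "\<exists>Q\<in>\<A>. \<forall>J\<in>\<A>. Q \<subseteq> J \<longrightarrow> J = Q"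
  proof (rule subset_Zorn_nonempty)
    show "\<A> \<noteq> {}"
      using I g unfolding \<A>_def by blast
    show "\<Union>\<C> \<in> \<A>" if "\<C> \<noteq> {}" and chain: "subset.chain \<A> \<C>" for \<C>
    proof -
      have "\<C> \<subseteq> \<A>" and "\<And>A B. A \<in> \<C> \<Longrightarrow> B \<in> \<C> \<Longrightarrow> A \<subseteq> B \<or> B \<subseteq> A"
        using chain unfolding subset_chain_def by blast+
      then have "ring_ideal (\<Union>\<C>)"
        using ring_ideal_chain_Union[OF \<open>\<C> \<noteq> {}\<close>] unfolding \<A>_def by blast
      moreover have "saturated P (\<Union>\<C>)"
        using \<open>\<C> \<subseteq> \<A>\<close> unfolding \<A>_def saturated_def by blast
      ultimately show ?thesis
        using \<open>\<C> \<noteq> {}\<close> \<open>\<C> \<subseteq> \<A>\<close> unfolding \<A>_def by blast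
    qed
  qed
  then obtain Q where "Q \<in> \<A>" and "\<forall>J\<in>\<A>. Q \<subseteq> J \<longrightarrow> J = Q"
    by blast
  then have "maximal_saturated_avoiding P g Q" "I \<subseteq> Q"
    unfolding maximal_saturated_avoiding_def \<A>_def by blast+
  then show thesis
    using that maximal_saturated_avoiding_in_primary_ideals_of[OF noeth P]
      maximal_saturated_avoidingD(3) by blast
qed

lemma exists_primary_ideal_avoiding_finite:
  fixes P :: "'a::comm_ring_1 set"
  assumes noeth: "noetherian_ring TYPE('a)" and P: "prime_ideal P"
    and I: "ring_ideal I" "I \<noteq> UNIV" "saturated P I" and G: "finite G" "G \<inter> I = {}"
  obtains Q where "Q \<in> primary_ideals_of P" "I \<subseteq> Q" "G \<inter> Q = {}"
  using G
proof (induction G arbitrary: thesis rule: finite_induct)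
  case empty
  have "1 \<notin> I"
    using I ring_ideal_eq_UNIV_iff by blast
  then show ?case
    using exists_primary_ideal_avoiding[OF noeth P I(1,3)] empty.prems(1) by blast
next
  case (insert g G)
  obtain Q1 where Q1: "Q1 \<in> primary_ideals_of P" "I \<subseteq> Q1" "G \<inter> Q1 = {}"
    using insert.IH insert.prems(2) by blast
  obtain Q2 where Q2: "Q2 \<in> primary_ideals_of P" "I \<subseteq> Q2" "g \<notin> Q2"
    using exists_primary_ideal_avoiding[OF noeth P I(1,3), of g] insert.prems(2) by blast
  show ?case
    using insert.prems(1)[OF primary_ideals_of_Int[OF Q1(1) Q2(1)]] Q1 Q2 by blast
qed

lemma primary_intersections_of_eq_saturated:
  fixes P :: "'a::comm_ring_1 set"
  assumes noeth: "noetherian_ring TYPE('a)" and P: "prime_ideal P"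
  shows "primary_intersections_of P = {I \<in> proper_ideals. saturated P I}"
proof (intro equalityI subsetI)
  fix I assume "I \<in> primary_intersections_of P"
  then obtain \<Q> where \<Q>: "\<Q> \<noteq> {}" "\<Q> \<subseteq> primary_ideals_of P" and I: "I = \<Inter>\<Q>"
    unfolding primary_intersections_of_def by blast
  have "ring_ideal (\<Inter>\<Q>)" "\<Inter>\<Q> \<noteq> UNIV"
    using \<Q> ring_ideal_Inter[of \<Q>] unfolding primary_ideals_of_def primary_ideal_def by blast+
  moreover have "saturated P (\<Inter>\<Q>)"
    using \<Q>(2) primary_ideals_of_saturated by (blast intro: saturated_Inter)
  ultimately show "I \<in> {I \<in> proper_ideals. saturated P I}"
    unfolding proper_ideals_def I by blast
next
  fix I assume "I \<in> {I \<in> proper_ideals. saturated P I}"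
  then have I: "ring_ideal I" "I \<noteq> UNIV" "saturated P I"
    unfolding proper_ideals_def by blast+
  define \<Q> where "\<Q> = {Q \<in> primary_ideals_of P. I \<subseteq> Q}"
  obtain Q0 where "Q0 \<in> primary_ideals_of P" "I \<subseteq> Q0"
    by (rule exists_primary_ideal_avoiding_finite[OF noeth P I, of "{}"]) auto
  then have "\<Q> \<noteq> {}"
    unfolding \<Q>_def by blast
  have "\<Inter>\<Q> \<subseteq> I"
  proof
    fix g assume g: "g \<in> \<Inter>\<Q>"
    show "g \<in> I"
    proof (rule ccontr)
      assume "g \<notin> I"
      then obtain Q where "Q \<in> primary_ideals_of P" "I \<subseteq> Q" "g \<notin> Q"
        by (rule exists_primary_ideal_avoiding[OF noeth P I(1,3)])
      then show False
        using g unfolding \<Q>_def by blast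
    qed
  qed
  moreover have "I \<subseteq> \<Inter>\<Q>"
    unfolding \<Q>_def by blast
  ultimately have "I = \<Inter>\<Q>"
    by (rule antisym[rotated])
  moreover have "\<Q> \<subseteq> primary_ideals_of P"
    unfolding \<Q>_def by blast
  ultimately show "I \<in> primary_intersections_of P"
    using \<open>\<Q> \<noteq> {}\<close> unfolding primary_intersections_of_def by blast
qed

section \<open>Localization and local rings\<close>

lemma is_localization_atD:
  assumes "is_localization_at P f"
  shows "f 0 = 0" "f 1 = 1" "f (x + y) = f x + f y" "f (x - y) = f x - f y" "f (x * y) = f x * f y"
    and "s \<notin> P \<Longrightarrow> f s dvd 1"
    and "f x = 0 \<Longrightarrow> \<exists>s. s \<notin> P \<and> s * x = 0"
    and "\<exists>a s. s \<notin> P \<and> z * f s = f a"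
proof -
  have add: "\<And>x y. f (x + y) = f x + f y"
    using assms unfolding is_localization_at_def by blast
  show "f 0 = 0"
    using add[of 0 0] by simp
  show "f (x - y) = f x - f y"
    using add[of "x - y" y] by (simp add: eq_diff_eq)
qed (use assms in \<open>auto simp: is_localization_at_def\<close>)

lemma saturated_vimage_localization:
  assumes f: "is_localization_at P f" and J: "ring_ideal J" "J \<noteq> UNIV"
  shows "f -` J \<in> proper_ideals" "saturated P (f -` J)"
proof -
  note f = is_localization_atD[OF f]
  have "ring_ideal (f -` J)"
    using J(1) unfolding ring_ideal_def by (simp add: f(1,3,5))
  moreover have "1 \<notin> f -` J"
    using J ring_ideal_eq_UNIV_iff f(2) by auto
  ultimately show "f -` J \<in> proper_ideals"
    unfolding proper_ideals_def by auto
  show "saturated P (f -` J)"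
    unfolding saturated_def
  proof (intro allI impI)
    fix s x assume s: "s \<notin> P" and "s * x \<in> f -` J"
    then have "u * (f s * f x) \<in> J" for u
      by (simp add: f(5) ring_ideal_mult_left[OF J(1)])
    moreover obtain u where "f s * u = 1"
      using f(6)[OF s] by (metis dvdE)
    then have "u * (f s * f x) = f x"
      by (metis mult.assoc mult.commute mult_1)
    ultimately show "x \<in> f -` J"
      by (metis vimage_eq)
  qed
qed

definition localization_extension :: "'a::comm_ring_1 set \<Rightarrow> ('a \<Rightarrow> 'b::comm_ring_1) \<Rightarrow> 'a set \<Rightarrow> 'b set"
  where "localization_extension P f I = {y. \<exists>a s. a \<in> I \<and> s \<notin> P \<and> y * f s = f a}"

lemma ring_ideal_localization_extension:
  assumes P: "prime_ideal P" and f: "is_localization_at P f" and I: "ring_ideal I"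
  shows "ring_ideal (localization_extension P f I)"
  unfolding ring_ideal_def
proof (intro conjI ballI allI)
  note f = is_localization_atD[OF f]
  show "0 \<in> localization_extension P f I"
    unfolding localization_extension_def using ring_ideal_zero[OF I] one_notin_prime_ideal[OF P] f(1)
    by (intro CollectI exI[of _ 0] exI[of _ 1]) simp
  show "y1 + y2 \<in> localization_extension P f I"
    if y: "y1 \<in> localization_extension P f I" "y2 \<in> localization_extension P f I" for y1 y2
  proof -
    obtain a1 s1 a2 s2 where h: "a1 \<in> I" "s1 \<notin> P" "y1 * f s1 = f a1"
      "a2 \<in> I" "s2 \<notin> P" "y2 * f s2 = f a2"
      using y unfolding localization_extension_def by blast
    have "(y1 + y2) * f (s1 * s2) = (y1 * f s1) * f s2 + (y2 * f s2) * f s1"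
      by (simp add: f(5) algebra_simps)
    also have "\<dots> = f (a1 * s2 + a2 * s1)"
      using h by (simp add: f(3,5))
    finally show ?thesis
      using h prime_ideal_mult_notin[OF P h(2,5)]
        ring_ideal_add[OF I ring_ideal_mult_right[OF I h(1)] ring_ideal_mult_right[OF I h(4)]]
      unfolding localization_extension_def by blast
  qed
  show "r * y \<in> localization_extension P f I" if y: "y \<in> localization_extension P f I" for r y
  proof -
    obtain a s where h: "a \<in> I" "s \<notin> P" "y * f s = f a"
      using y unfolding localization_extension_def by blast
    obtain b t where h2: "t \<notin> P" "r * f t = f b"
      using f(8) by blast
    have "(r * y) * f (t * s) = (r * f t) * (y * f s)"
      by (simp add: f(5) algebra_simps)
    also have "\<dots> = f (b * a)"
      using h h2 by (simp add: f(5))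
    finally show ?thesis
      using ring_ideal_mult_left[OF I h(1)] prime_ideal_mult_notin[OF P h2(1) h(2)]
      unfolding localization_extension_def by blast
  qed
qed

lemma vimage_localization_extension:
  assumes P: "prime_ideal P" and f: "is_localization_at P f" and I: "ring_ideal I" "saturated P I"
  shows "f -` localization_extension P f I = I"
proof
  note f = is_localization_atD[OF f]
  show "I \<subseteq> f -` localization_extension P f I"
    unfolding localization_extension_def using one_notin_prime_ideal[OF P] f(2) by force
  show "f -` localization_extension P f I \<subseteq> I"
  proof
    fix x assume "x \<in> f -` localization_extension P f I"
    then obtain a s where as: "a \<in> I" "s \<notin> P" "f x * f s = f a"
      unfolding localization_extension_def by blast
    then have "f (x * s - a) = 0"
      by (simp add: f(4,5))
    then obtain t where t: "t \<notin> P" "t * (x * s - a) = 0"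
      using f(7) by blast
    then have "(t * s) * x = t * a"
      by (simp add: algebra_simps)
    then have "(t * s) * x \<in> I"
      using ring_ideal_mult_left[OF I(1) as(1)] by simp
    then show "x \<in> I"
      using saturatedD[OF I(2) prime_ideal_mult_notin[OF P t(1) as(2)]] by blast
  qed
qed

lemma vimage_localization_proper_ideals:
  fixes f :: "'a::comm_ring_1 \<Rightarrow> 'b::comm_ring_1"
  assumes P: "prime_ideal P" and f: "is_localization_at P f"
  shows "(\<lambda>J. f -` J) ` (proper_ideals :: 'b set set) = {I \<in> proper_ideals. saturated P I}"
proof (intro equalityI subsetI)
  fix I assume "I \<in> (\<lambda>J. f -` J) ` (proper_ideals :: 'b set set)"
  then show "I \<in> {I \<in> proper_ideals. saturated P I}"
    using saturated_vimage_localization[OF f] unfolding proper_ideals_def by blast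
next
  fix I assume "I \<in> {I \<in> proper_ideals. saturated P I}"
  then have I: "ring_ideal I" "I \<noteq> UNIV" "saturated P I"
    unfolding proper_ideals_def by blast+
  let ?J = "localization_extension P f I"
  have "f -` ?J = I"
    using vimage_localization_extension[OF P f I(1,3)] .
  moreover have "?J \<noteq> UNIV"
    using I(2) calculation by auto
  ultimately show "I \<in> (\<lambda>J. f -` J) ` (proper_ideals :: 'b set set)"
    using ring_ideal_localization_extension[OF P f I(1)] unfolding proper_ideals_def by blast
qed

lemma exists_maximal_ideal_superset:
  assumes I: "ring_ideal (I :: 'a::comm_ring_1 set)" "I \<noteq> UNIV"
  obtains M where "maximal_ideal M" "I \<subseteq> M"
proof -
  define \<A> where "\<A> = {J. ring_ideal J \<and> 1 \<notin> J \<and> I \<subseteq> J}"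
  have "\<exists>M\<in>\<A>. \<forall>J\<in>\<A>. M \<subseteq> J \<longrightarrow> J = M"
  proof (rule subset_Zorn_nonempty)
    show "\<A> \<noteq> {}"
      using I ring_ideal_eq_UNIV_iff unfolding \<A>_def by blast
    show "\<Union>\<C> \<in> \<A>" if "\<C> \<noteq> {}" and chain: "subset.chain \<A> \<C>" for \<C>
    proof -
      have "\<C> \<subseteq> \<A>" and "\<And>A B. A \<in> \<C> \<Longrightarrow> B \<in> \<C> \<Longrightarrow> A \<subseteq> B \<or> B \<subseteq> A"
        using chain unfolding subset_chain_def by blast+
      then have "ring_ideal (\<Union>\<C>)"
        using ring_ideal_chain_Union[OF \<open>\<C> \<noteq> {}\<close>] unfolding \<A>_def by blast
      then show ?thesis
        using \<open>\<C> \<noteq> {}\<close> \<open>\<C> \<subseteq> \<A>\<close> unfolding \<A>_def by blast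
    qed
  qed
  then obtain M where "M \<in> \<A>" and max: "\<forall>J\<in>\<A>. M \<subseteq> J \<longrightarrow> J = M"
    by blast
  then have "maximal_ideal M"
    unfolding maximal_ideal_def \<A>_def using ring_ideal_eq_UNIV_iff by blast
  then show thesis
    using that \<open>M \<in> \<A>\<close> unfolding \<A>_def by blast
qed

lemma local_ring_unit:
  assumes M: "local_ring_with M" and s: "s \<notin> M"
  shows "s dvd 1"
proof (rule ccontr)
  assume "\<not> s dvd 1"
  have ideal: "ring_ideal (ideal_insert {0} s)"
    by (rule ring_ideal_ideal_insert) (simp add: ring_ideal_def)
  have "1 \<notin> ideal_insert {0} s"
    using \<open>\<not> s dvd 1\<close> unfolding ideal_insert_def by (auto dest: sym simp: dvd_def mult.commute)
  then obtain M' where "maximal_ideal M'" "ideal_insert {0} s \<subseteq> M'"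
    using exists_maximal_ideal_superset[OF ideal] by blast
  moreover have "s \<in> ideal_insert {0} s"
    by (rule in_ideal_insert) (simp add: ring_ideal_def)
  ultimately show False
    using M s unfolding local_ring_with_def by blast
qed

lemma local_ring_saturated:
  assumes M: "local_ring_with M" and I: "ring_ideal I"
  shows "saturated M I"
  unfolding saturated_def
proof (intro allI impI)
  fix s x assume s: "s \<notin> M" and "s * x \<in> I"
  then have "u * (s * x) \<in> I" for u
    by (simp add: ring_ideal_mult_left[OF I])
  moreover obtain u where "1 = s * u"
    using local_ring_unit[OF M s] by (rule dvdE)
  then have "u * (s * x) = x"
    by (metis mult.assoc mult.commute mult_1)
  ultimately show "x \<in> I"
    by metis
qed

section \<open>Zariski and constructible topologies on ideals\<close>

definition ideals_containing :: "'a::comm_ring_1 set \<Rightarrow> 'a set set" where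
  "ideals_containing F = {I. ring_ideal I \<and> F \<subseteq> I}"

lemma openin_zariski_ideals:
  "openin zariski_ideals = arbitrary union_of (\<lambda>U. \<exists>F. finite F \<and> U = ideals_containing F)"
proof -
  have "istopology (arbitrary union_of (\<lambda>U. \<exists>F. finite F \<and> U = ideals_containing (F :: 'a set)))"
  proof (rule istopology_base)
    fix S T :: "'a set set"
    assume "\<exists>F. finite F \<and> S = ideals_containing F" "\<exists>F. finite F \<and> T = ideals_containing F"
    then obtain F G where "finite F" "S = ideals_containing F" "finite G" "T = ideals_containing G"
      by blast
    then have "finite (F \<union> G)" "S \<inter> T = ideals_containing (F \<union> G)"
      unfolding ideals_containing_def by auto
    then show "\<exists>F. finite F \<and> S \<inter> T = ideals_containing F"
      by blast
  qed
  then show ?thesis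
    unfolding zariski_ideals_def ideals_containing_def by simp
qed

lemma openin_ideals_containing: "finite F \<Longrightarrow> openin zariski_ideals (ideals_containing F)"
  unfolding openin_zariski_ideals by (rule arbitrary_union_of_inc) blast

lemma topspace_zariski_ideals: "topspace zariski_ideals = {I :: 'a::comm_ring_1 set. ring_ideal I}"
proof
  show "topspace zariski_ideals \<subseteq> {I :: 'a set. ring_ideal I}"
    using openin_topspace[of zariski_ideals]
    unfolding openin_zariski_ideals union_of_def ideals_containing_def by blast
  show "{I :: 'a set. ring_ideal I} \<subseteq> topspace zariski_ideals"
    using openin_subset[OF openin_ideals_containing[of "{}"]] unfolding ideals_containing_def by simp
qed

lemma zariski_open_neighbourhood:
  assumes "openin zariski_ideals U" "I \<in> U"
  obtains F where "finite F" "F \<subseteq> I" "ideals_containing F \<subseteq> U"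
proof -
  obtain \<U> where "\<U> \<subseteq> {V. \<exists>F. finite F \<and> V = ideals_containing F}" "\<Union>\<U> = U"
    using assms(1) unfolding openin_zariski_ideals union_of_def by auto
  then obtain F where "finite F" "I \<in> ideals_containing F" "ideals_containing F \<subseteq> U"
    using assms(2) by blast
  then show thesis
    using that unfolding ideals_containing_def by blast
qed

text \<open>The ideal generated by \<open>F\<close> is the least element of \<open>ideals_containing F\<close>, and
  Zariski-open sets are closed upwards, so one open set of any cover already covers it.\<close>

lemma compactin_ideals_containing:
  assumes "finite F"
  shows "compactin zariski_ideals (ideals_containing F)"
  unfolding compactin_def
proof (intro conjI allI impI)
  show "ideals_containing F \<subseteq> topspace zariski_ideals"
    unfolding topspace_zariski_ideals ideals_containing_def by blast
next
  fix \<U> assume \<U>: "Ball \<U> (openin zariski_ideals) \<and> ideals_containing F \<subseteq> \<Union>\<U>"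
  define I0 where "I0 = \<Inter>(ideals_containing F)"
  have "I0 \<in> ideals_containing F"
    using ring_ideal_Inter[of "ideals_containing F"] unfolding I0_def ideals_containing_def by blast
  then obtain U where U: "U \<in> \<U>" "I0 \<in> U"
    using \<U> by blast
  then obtain G where G: "G \<subseteq> I0" "ideals_containing G \<subseteq> U"
    using zariski_open_neighbourhood \<U> by metis
  have "ideals_containing F \<subseteq> ideals_containing G"
    using G(1) unfolding I0_def ideals_containing_def by blast
  then show "\<exists>\<F>. finite \<F> \<and> \<F> \<subseteq> \<U> \<and> ideals_containing F \<subseteq> \<Union>\<F>"
    using U G(2) by (intro exI[of _ "{U}"]) auto
qed

lemma zariski_compact_open_avoidable:
  assumes V: "openin zariski_ideals V" "compactin zariski_ideals V" and I: "ring_ideal I" "I \<notin> V"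
  obtains G where "finite G" "G \<inter> I = {}" "\<And>J. G \<inter> J = {} \<Longrightarrow> J \<notin> V"
proof -
  obtain \<U> where \<U>: "\<U> \<subseteq> {W. \<exists>F. finite F \<and> W = ideals_containing F}" "\<Union>\<U> = V"
    using V(1) unfolding openin_zariski_ideals union_of_def by auto
  then have "Ball \<U> (openin zariski_ideals) \<and> V \<subseteq> \<Union>\<U>"
    using openin_ideals_containing by blast
  then obtain \<F> where \<F>: "finite \<F>" "\<F> \<subseteq> \<U>" "V \<subseteq> \<Union>\<F>"
    using V(2) unfolding compactin_def by (elim conjE allE[of _ \<U>] impE) blast+
  have "\<exists>g. g \<notin> I \<and> (\<forall>J. g \<notin> J \<longrightarrow> J \<notin> W)" if "W \<in> \<F>" for W
  proof -
    obtain F where F: "W = ideals_containing F"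
      using \<U>(1) \<F>(2) \<open>W \<in> \<F>\<close> by blast
    have "I \<notin> W"
      using I(2) \<U>(2) \<F>(2) \<open>W \<in> \<F>\<close> by blast
    then show ?thesis
      using I(1) unfolding F ideals_containing_def by blast
  qed
  then obtain g where g_I: "\<And>W. W \<in> \<F> \<Longrightarrow> g W \<notin> I"
    and g_W: "\<And>W J. W \<in> \<F> \<Longrightarrow> g W \<notin> J \<Longrightarrow> J \<notin> W"
    by metis
  show thesis
  proof (rule that[of "g ` \<F>"])
    show "finite (g ` \<F>)"
      using \<F>(1) by simp
    show "g ` \<F> \<inter> I = {}"
      using g_I by blast
    show "J \<notin> V" if "g ` \<F> \<inter> J = {}" for J
    proof
      assume "J \<in> V"
      then obtain W where "W \<in> \<F>" "J \<in> W"
        using \<F>(3) by blast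
      then show False
        using g_W that by blast
    qed
  qed
qed

definition constructible_subbasis :: "'x topology \<Rightarrow> 'x set \<Rightarrow> bool" where
  "constructible_subbasis X U \<longleftrightarrow> (openin X U \<and> compactin X U) \<or>
     (\<exists>V. openin X V \<and> compactin X V \<and> U = topspace X - V)"

lemma openin_constructible_topology:
  "openin (constructible_topology X) =
     arbitrary union_of (finite intersection_of constructible_subbasis X relative_to topspace X)"
  unfolding constructible_topology_def constructible_subbasis_def[abs_def]
  by (rule ext) (rule openin_subbase)

lemma topspace_constructible_topology: "topspace (constructible_topology X) = topspace X"
  unfolding constructible_topology_def by simp

lemma openin_constructible_subbasis:
  assumes "constructible_subbasis X U"
  shows "openin (constructible_topology X) U"
proof -
  have "U \<subseteq> topspace X"
    using assms openin_subset unfolding constructible_subbasis_def by blast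
  then have "(finite intersection_of constructible_subbasis X relative_to topspace X) U"
    using finite_intersection_of_inc[of "constructible_subbasis X" U, OF assms]
    unfolding relative_to_def by (intro exI[of _ U]) blast
  then show ?thesis
    unfolding openin_constructible_topology by (rule arbitrary_union_of_inc)
qed

lemma constructible_neighbourhood_subbasis:
  assumes "openin (constructible_topology X) W" "x \<in> W"
  obtains \<V> where "finite \<V>" "\<And>U. U \<in> \<V> \<Longrightarrow> constructible_subbasis X U \<and> x \<in> U"
    "topspace X \<inter> \<Inter>\<V> \<subseteq> W"
proof -
  obtain \<W> where \<W>: "\<W> \<subseteq> Collect (finite intersection_of constructible_subbasis X relative_to topspace X)"
    "\<Union>\<W> = W"
    using assms(1) unfolding openin_constructible_topology union_of_def by auto
  then obtain B where "B \<in> \<W>" "x \<in> B"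
    using assms(2) by blast
  then obtain \<V> where "finite \<V>" "\<V> \<subseteq> Collect (constructible_subbasis X)" "B = topspace X \<inter> \<Inter>\<V>"
    using \<W>(1) unfolding relative_to_def intersection_of_def by blast
  then show thesis
    using that \<open>x \<in> B\<close> \<open>B \<in> \<W>\<close> \<W>(2) by blast
qed

definition ideals_containing_avoiding :: "'a::comm_ring_1 set \<Rightarrow> 'a set \<Rightarrow> 'a set set" where
  "ideals_containing_avoiding F G = {J. ring_ideal J \<and> F \<subseteq> J \<and> G \<inter> J = {}}"

lemma openin_constructible_ideals_containing_avoiding:
  assumes "finite F" "finite G"
  shows "openin (constructible_topology zariski_ideals) (ideals_containing_avoiding F G)"
proof -
  let ?V = "\<Union>g\<in>G. ideals_containing {g}"
  have "openin zariski_ideals ?V"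
    by (intro openin_Union) (auto simp: openin_ideals_containing)
  moreover have "compactin zariski_ideals ?V"
    by (intro compactin_Union) (auto simp: assms(2) compactin_ideals_containing)
  ultimately have "openin (constructible_topology zariski_ideals) (topspace zariski_ideals - ?V)"
    by (intro openin_constructible_subbasis) (auto simp: constructible_subbasis_def)
  moreover have "openin (constructible_topology zariski_ideals) (ideals_containing F)"
    by (intro openin_constructible_subbasis)
      (simp add: constructible_subbasis_def assms(1) openin_ideals_containing compactin_ideals_containing)
  moreover have "ideals_containing_avoiding F G = ideals_containing F \<inter> (topspace zariski_ideals - ?V)"
    unfolding ideals_containing_avoiding_def ideals_containing_def topspace_zariski_ideals by auto
  ultimately show ?thesis
    by (simp add: openin_Int)
qed

lemma constructible_subbasis_neighbourhood:
  assumes U: "constructible_subbasis zariski_ideals U" and I: "I \<in> U" "ring_ideal I"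
  obtains F G where "finite F" "finite G" "F \<subseteq> I" "G \<inter> I = {}"
    "ideals_containing_avoiding F G \<subseteq> U"
  using U unfolding constructible_subbasis_def
proof (elim disjE exE conjE)
  assume "openin zariski_ideals U"
  then obtain F where "finite F" "F \<subseteq> I" "ideals_containing F \<subseteq> U"
    using zariski_open_neighbourhood I(1) by metis
  then show thesis
    using that[of F "{}"] unfolding ideals_containing_def ideals_containing_avoiding_def by auto
next
  fix V assume V: "openin zariski_ideals V" "compactin zariski_ideals V"
    and U_eq: "U = topspace zariski_ideals - V"
  then obtain G where "finite G" "G \<inter> I = {}" "\<And>J. G \<inter> J = {} \<Longrightarrow> J \<notin> V"
    using zariski_compact_open_avoidable[OF V I(2)] I(1) by blast
  then show thesis
    using that[of "{}" G] unfolding U_eq ideals_containing_avoiding_def topspace_zariski_ideals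
    by auto
qed

lemma constructible_neighbourhood_ideals:
  assumes W: "openin (constructible_topology zariski_ideals) W" and I: "I \<in> W"
  obtains F G where "finite F" "finite G" "F \<subseteq> I" "G \<inter> I = {}"
    "ideals_containing_avoiding F G \<subseteq> W"
proof -
  have "ring_ideal I"
    using openin_subset[OF W] I unfolding topspace_constructible_topology topspace_zariski_ideals
    by blast
  obtain \<V> where \<V>: "finite \<V>" "\<And>U. U \<in> \<V> \<Longrightarrow> constructible_subbasis zariski_ideals U \<and> I \<in> U"
    "topspace zariski_ideals \<inter> \<Inter>\<V> \<subseteq> W"
    using constructible_neighbourhood_subbasis[OF W I] by blast
  have "\<exists>F G. finite F \<and> finite G \<and> F \<subseteq> I \<and> G \<inter> I = {} \<and> ideals_containing_avoiding F G \<subseteq> U"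
    if "U \<in> \<V>" for U
    using constructible_subbasis_neighbourhood \<V>(2)[OF that] \<open>ring_ideal I\<close> by metis
  then obtain F G where FG: "\<And>U. U \<in> \<V> \<Longrightarrow> finite (F U) \<and> finite (G U) \<and> F U \<subseteq> I \<and>
      G U \<inter> I = {} \<and> ideals_containing_avoiding (F U) (G U) \<subseteq> U"
    by metis
  show thesis
  proof (rule that[of "\<Union>(F ` \<V>)" "\<Union>(G ` \<V>)"])
    show "finite (\<Union>(F ` \<V>))" "finite (\<Union>(G ` \<V>))" "\<Union>(F ` \<V>) \<subseteq> I" "\<Union>(G ` \<V>) \<inter> I = {}"
      using \<V>(1) FG by auto
    show "ideals_containing_avoiding (\<Union>(F ` \<V>)) (\<Union>(G ` \<V>)) \<subseteq> W"
    proof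
      fix J assume J: "J \<in> ideals_containing_avoiding (\<Union>(F ` \<V>)) (\<Union>(G ` \<V>))"
      then have "J \<in> ideals_containing_avoiding (F U) (G U)" if "U \<in> \<V>" for U
        using that unfolding ideals_containing_avoiding_def by blast
      then have "J \<in> \<Inter>\<V>"
        using FG by blast
      moreover have "J \<in> topspace zariski_ideals"
        using J unfolding ideals_containing_avoiding_def topspace_zariski_ideals by blast
      ultimately show "J \<in> W"
        using \<V>(3) by blast
    qed
  qed
qed

lemma in_constructible_closure_of_ideals:
  assumes S: "S \<subseteq> {Q. ring_ideal Q}"
  shows "I \<in> constructible_topology zariski_ideals closure_of S \<longleftrightarrow>
    ring_ideal I \<and> (\<forall>F G. finite F \<and> finite G \<and> F \<subseteq> I \<and> G \<inter> I = {} \<longrightarrow>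
      (\<exists>Q\<in>S. F \<subseteq> Q \<and> G \<inter> Q = {}))"
    (is "_ \<longleftrightarrow> ring_ideal I \<and> ?meets")
proof
  assume I: "I \<in> constructible_topology zariski_ideals closure_of S"
  then have "ring_ideal I"
    using closure_of_subset_topspace[of "constructible_topology zariski_ideals" S]
    unfolding topspace_constructible_topology topspace_zariski_ideals by blast
  moreover have ?meets
  proof (intro allI impI, elim conjE)
    fix F G assume FG: "finite F" "finite G" "F \<subseteq> I" "G \<inter> I = {}"
    then have "I \<in> ideals_containing_avoiding F G"
      using \<open>ring_ideal I\<close> unfolding ideals_containing_avoiding_def by blast
    then obtain Q where "Q \<in> S" "Q \<in> ideals_containing_avoiding F G"
      using I openin_constructible_ideals_containing_avoiding[OF FG(1,2)]
      unfolding in_closure_of by blast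
    then show "\<exists>Q\<in>S. F \<subseteq> Q \<and> G \<inter> Q = {}"
      unfolding ideals_containing_avoiding_def by blast
  qed
  ultimately show "ring_ideal I \<and> ?meets" ..
next
  assume "ring_ideal I \<and> ?meets"
  then have I: "ring_ideal I" and meets: ?meets
    by blast+
  show "I \<in> constructible_topology zariski_ideals closure_of S"
    unfolding in_closure_of topspace_constructible_topology topspace_zariski_ideals
  proof (intro conjI allI impI CollectI I, elim conjE)
    fix T assume "I \<in> T" "openin (constructible_topology zariski_ideals) T"
    then obtain F G where FG: "finite F" "finite G" "F \<subseteq> I" "G \<inter> I = {}"
      and box: "ideals_containing_avoiding F G \<subseteq> T"
      using constructible_neighbourhood_ideals by metis
    then obtain Q where "Q \<in> S" "F \<subseteq> Q" "G \<inter> Q = {}"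
      using meets by blast
    moreover have "ring_ideal Q"
      using S \<open>Q \<in> S\<close> by blast
    ultimately show "\<exists>Q. Q \<in> S \<and> Q \<in> T"
      using box unfolding ideals_containing_avoiding_def by blast
  qed
qed

lemma in_constructible_closure_primary_ideals_of_iff:
  fixes P :: "'a::comm_ring_1 set"
  assumes noeth: "noetherian_ring TYPE('a)" and P: "prime_ideal P"
    and I: "ring_ideal I" "I \<noteq> UNIV"
  shows "I \<in> constructible_topology zariski_ideals closure_of primary_ideals_of P \<longleftrightarrow> saturated P I"
proof -
  have "primary_ideals_of P \<subseteq> {Q. ring_ideal Q}"
    unfolding primary_ideals_of_def primary_ideal_def by blast
  note closure = in_constructible_closure_of_ideals[OF this]
  show ?thesis
  proof
    assume "I \<in> constructible_topology zariski_ideals closure_of primary_ideals_of P"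
    then have meets: "\<forall>F G. finite F \<and> finite G \<and> F \<subseteq> I \<and> G \<inter> I = {} \<longrightarrow>
        (\<exists>Q\<in>primary_ideals_of P. F \<subseteq> Q \<and> G \<inter> Q = {})"
      unfolding closure by blast
    show "saturated P I"
      unfolding saturated_def
    proof (intro allI impI)
      fix s x assume s: "s \<notin> P" and sx: "s * x \<in> I"
      show "x \<in> I"
      proof (rule ccontr)
        assume "x \<notin> I"
        then obtain Q where "Q \<in> primary_ideals_of P" "s * x \<in> Q" "x \<notin> Q"
          using meets[rule_format, of "{s * x}" "{x}"] sx by auto
        then show False
          using saturatedD[OF primary_ideals_of_saturated s] by blast
      qed
    qed
  next
    assume sat: "saturated P I"
    have "\<exists>Q\<in>primary_ideals_of P. F \<subseteq> Q \<and> G \<inter> Q = {}"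
      if "finite F" "finite G" "F \<subseteq> I" "G \<inter> I = {}" for F G
    proof -
      obtain Q where "Q \<in> primary_ideals_of P" "I \<subseteq> Q" "G \<inter> Q = {}"
        using exists_primary_ideal_avoiding_finite[OF noeth P I sat \<open>finite G\<close> \<open>G \<inter> I = {}\<close>] .
      then show ?thesis
        using \<open>F \<subseteq> I\<close> by blast
    qed
    then show "I \<in> constructible_topology zariski_ideals closure_of primary_ideals_of P"
      unfolding closure using I(1) by blast
  qed
qed

lemma constructible_closure_primary_ideals_of:
  fixes P :: "'a::comm_ring_1 set"
  assumes noeth: "noetherian_ring TYPE('a)" and P: "prime_ideal P"
  shows "subtopology (constructible_topology zariski_ideals) proper_ideals closure_of primary_ideals_of P
    = {I \<in> proper_ideals. saturated P I}"
proof -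
  have "primary_ideals_of P \<subseteq> proper_ideals"
    unfolding primary_ideals_of_def primary_ideal_def proper_ideals_def by blast
  then show ?thesis
    unfolding closure_of_subtopology Int_absorb1[OF \<open>primary_ideals_of P \<subseteq> proper_ideals\<close>]
    using in_constructible_closure_primary_ideals_of_iff[OF noeth P]
    unfolding proper_ideals_def by blast
qed

theorem proposition5p3:
  assumes "noetherian_ring TYPE('a::comm_ring_1)"
  shows "(\<forall>(P :: 'a set) (f :: 'a \<Rightarrow> 'b::comm_ring_1).
            prime_ideal P \<and> is_localization_at P f \<longrightarrow>
              primary_intersections_of P =
                (subtopology (constructible_topology zariski_ideals) proper_ideals)
                  closure_of primary_ideals_of P
            \<and> (subtopology (constructible_topology zariski_ideals) proper_ideals)
                  closure_of primary_ideals_of P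
                = (\<lambda>J. f -` J) ` (proper_ideals :: 'b set set))
       \<and> (\<forall>M :: 'a set. local_ring_with M \<longrightarrow>
            (subtopology (constructible_topology zariski_ideals) proper_ideals)
              closure_of primary_ideals_of M = proper_ideals)"
proof (intro conjI allI impI; (elim conjE)?)
  fix P :: "'a set" and f :: "'a \<Rightarrow> 'b"
  assume P: "prime_ideal P" and f: "is_localization_at P f"
  show "primary_intersections_of P =
      subtopology (constructible_topology zariski_ideals) proper_ideals closure_of primary_ideals_of P"
    using primary_intersections_of_eq_saturated[OF assms P]
      constructible_closure_primary_ideals_of[OF assms P] by simp
  show "subtopology (constructible_topology zariski_ideals) proper_ideals closure_of primary_ideals_of P
      = (\<lambda>J. f -` J) ` (proper_ideals :: 'b set set)"
    using vimage_localization_proper_ideals[OF P f]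
      constructible_closure_primary_ideals_of[OF assms P] by simp
next
  fix M :: "'a set"
  assume M: "local_ring_with M"
  then have "prime_ideal M"
    using maximal_ideal_imp_prime_ideal unfolding local_ring_with_def by blast
  then show "subtopology (constructible_topology zariski_ideals) proper_ideals closure_of
      primary_ideals_of M = proper_ideals"
    using constructible_closure_primary_ideals_of[OF assms] local_ring_saturated[OF M]
    unfolding proper_ideals_def by auto
qed

end
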